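(* Let $W=\mathfrak{S}_n$, $\ast=\mathrm{id}$, $w\in I_\ast$, and let $(s_a,s_b,w)$ be a reduced sequence with $|a-b|>1$. Then one of the following holds: (a) $s_aw\ne ws_a$, $s_bs_aws_a\neq s_aws_as_b$, $s_bw\ne ws_b$, $s_as_bws_b\neq s_bws_bs_a$; (b) $s_aw=ws_a$, $s_bs_aw\ne s_aws_b$, $s_bw\neq ws_b$, $s_as_bws_b=s_bws_bs_a$; (c) $s_aw\neq ws_a$, $s_bs_aws_a=s_aws_as_b$, $s_bw=ws_b$, $s_as_bw\neq s_bws_a$; (d) $s_aw=ws_a$, $s_bs_aw=s_aws_b$, $s_bw=ws_b$, $s_as_bw=s_bws_a$.
   Context: $\mathfrak{S}_n$ with $s_i=(i,i+1)$; $I_\ast=\{w\in\mathfrak{S}_n:w^2=1\}$. For a simple transposition $s$ and $w\in I_\ast$: $s\ltimes w=sw$ if $sw=ws$, $s\ltimes w=sws$ otherwise; iterated from the right. $\rho(w)$ is the minimal $k$ with $w=s_{i_1}\ltimes\cdots\ltimes s_{i_k}\ltimes1$. The sequence $(s_a,s_b,w)$ is reduced if $\rho(s_a\ltimes s_b\ltimes w)=\rho(w)+2$. *)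

theory Defs
  imports "HOL-Combinatorics.Combinatorics"
begin

text \<open>The symmetric group S_n realised as permutations of {1..n}; the group
product u w is function composition u \<circ> w and 1 is id.\<close>

definition Sym :: "nat \<Rightarrow> (nat \<Rightarrow> nat) set" where
  "Sym n = {w. w permutes {1..n}}"

text \<open>Twisted involutions for the trivial automorphism: the involutions of S_n.\<close>
definition Inv :: "nat \<Rightarrow> (nat \<Rightarrow> nat) set" where
  "Inv n = {w \<in> Sym n. w \<circ> w = id}"

definition simple :: "nat \<Rightarrow> nat \<Rightarrow> nat" where
  "simple i = Transposition.transpose i (Suc i)"

definition ltimes :: "(nat \<Rightarrow> nat) \<Rightarrow> (nat \<Rightarrow> nat) \<Rightarrow> (nat \<Rightarrow> nat)" where
  "ltimes s w = (if s \<circ> w = w \<circ> s then s \<circ> w else s \<circ> w \<circ> s)"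

definition ltimes_word :: "nat list \<Rightarrow> (nat \<Rightarrow> nat)" where
  "ltimes_word is = foldr (\<lambda>i w. ltimes (simple i) w) is id"

definition rho :: "nat \<Rightarrow> (nat \<Rightarrow> nat) \<Rightarrow> nat" where
  "rho n w = (LEAST k. \<exists>is. length is = k \<and> set is \<subseteq> {1..<n} \<and> w = ltimes_word is)"

definition reduced_seq :: "nat \<Rightarrow> nat \<Rightarrow> nat \<Rightarrow> (nat \<Rightarrow> nat) \<Rightarrow> bool" where
  "reduced_seq n a b w \<longleftrightarrow>
     rho n (ltimes (simple a) (ltimes (simple b) w)) = rho n w + 2"

end

theory Submission
  imports Defs
begin

text \<open>For commuting involutions \<open>s\<^sub>a, s\<^sub>b\<close>, conjugating by \<open>s\<^sub>a\<close> or multiplying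
  on the left by \<open>s\<^sub>a\<close> does not change whether \<open>w\<close> commutes with \<open>s\<^sub>b\<close>. Hence each of the
  four compound conditions of the corollary is equivalent to \<open>s\<^sub>a w = w s\<^sub>a\<close> or to
  \<open>s\<^sub>b w = w s\<^sub>b\<close>, and the four cases are the four truth assignments of these two
  conditions.\<close>

lemma involution_comp_left_cancel:
  assumes "s \<circ> s = id"
  shows "s \<circ> x = s \<circ> y \<longleftrightarrow> x = y"
  by (metis assms comp_assoc id_comp)

lemma involution_conj_cancel:
  assumes "s \<circ> s = id"
  shows "s \<circ> x \<circ> s = s \<circ> y \<circ> s \<longleftrightarrow> x = y"
  by (metis assms comp_assoc comp_id involution_comp_left_cancel)

lemma commute_conj_iff:
  assumes "s \<circ> s = id" and "s \<circ> t = t \<circ> s"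
  shows "t \<circ> s \<circ> w \<circ> s = s \<circ> w \<circ> s \<circ> t \<longleftrightarrow> t \<circ> w = w \<circ> t"
proof -
  have "t \<circ> s \<circ> w \<circ> s = s \<circ> (t \<circ> w) \<circ> s"
    using assms(2) by (metis comp_assoc)
  moreover have "s \<circ> w \<circ> s \<circ> t = s \<circ> (w \<circ> t) \<circ> s"
    using assms(2) by (simp add: comp_assoc)
  ultimately show ?thesis
    using involution_conj_cancel[OF assms(1)] by simp
qed

lemma commute_left_mult_iff:
  assumes "s \<circ> s = id" and "s \<circ> t = t \<circ> s"
  shows "t \<circ> s \<circ> w = s \<circ> w \<circ> t \<longleftrightarrow> t \<circ> w = w \<circ> t"
proof -
  have "t \<circ> s \<circ> w = s \<circ> (t \<circ> w)"
    using assms(2) by (metis comp_assoc)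
  then show ?thesis
    using involution_comp_left_cancel[OF assms(1)] by (simp add: comp_assoc)
qed

lemma commuting_involutions_cases:
  fixes sa sb w :: "'a \<Rightarrow> 'a"
  assumes "sa \<circ> sa = id" and "sb \<circ> sb = id" and "sa \<circ> sb = sb \<circ> sa"
  shows "(sa \<circ> w \<noteq> w \<circ> sa \<and> sb \<circ> sa \<circ> w \<circ> sa \<noteq> sa \<circ> w \<circ> sa \<circ> sb \<and>
          sb \<circ> w \<noteq> w \<circ> sb \<and> sa \<circ> sb \<circ> w \<circ> sb \<noteq> sb \<circ> w \<circ> sb \<circ> sa)
       \<or> (sa \<circ> w = w \<circ> sa \<and> sb \<circ> sa \<circ> w \<noteq> sa \<circ> w \<circ> sb \<and>
          sb \<circ> w \<noteq> w \<circ> sb \<and> sa \<circ> sb \<circ> w \<circ> sb = sb \<circ> w \<circ> sb \<circ> sa)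
       \<or> (sa \<circ> w \<noteq> w \<circ> sa \<and> sb \<circ> sa \<circ> w \<circ> sa = sa \<circ> w \<circ> sa \<circ> sb \<and>
          sb \<circ> w = w \<circ> sb \<and> sa \<circ> sb \<circ> w \<noteq> sb \<circ> w \<circ> sa)
       \<or> (sa \<circ> w = w \<circ> sa \<and> sb \<circ> sa \<circ> w = sa \<circ> w \<circ> sb \<and>
          sb \<circ> w = w \<circ> sb \<and> sa \<circ> sb \<circ> w = sb \<circ> w \<circ> sa)"
  using commute_conj_iff[OF assms(1,3)] commute_conj_iff[OF assms(2) assms(3)[symmetric]]
    commute_left_mult_iff[OF assms(1,3)] commute_left_mult_iff[OF assms(2) assms(3)[symmetric]]
  by blast

lemma simple_involution: "simple i \<circ> simple i = id"
  by (simp add: simple_def fun_eq_iff)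

lemma simple_commute:
  assumes "\<bar>int i - int j\<bar> > 1"
  shows "simple i \<circ> simple j = simple j \<circ> simple i"
  using assms by (auto simp: simple_def fun_eq_iff Transposition.transpose_def)

theorem corollary2p15:
  fixes n a b :: nat and w :: "nat \<Rightarrow> nat"
  assumes "1 \<le> a" and "a < n" and "1 \<le> b" and "b < n"
    and "w \<in> Inv n"
    and "reduced_seq n a b w"
    and "\<bar>int a - int b\<bar> > 1"
  defines "sa \<equiv> simple a" and "sb \<equiv> simple b"
  shows "(sa \<circ> w \<noteq> w \<circ> sa \<and> sb \<circ> sa \<circ> w \<circ> sa \<noteq> sa \<circ> w \<circ> sa \<circ> sb \<and>
          sb \<circ> w \<noteq> w \<circ> sb \<and> sa \<circ> sb \<circ> w \<circ> sb \<noteq> sb \<circ> w \<circ> sb \<circ> sa)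
       \<or> (sa \<circ> w = w \<circ> sa \<and> sb \<circ> sa \<circ> w \<noteq> sa \<circ> w \<circ> sb \<and>
          sb \<circ> w \<noteq> w \<circ> sb \<and> sa \<circ> sb \<circ> w \<circ> sb = sb \<circ> w \<circ> sb \<circ> sa)
       \<or> (sa \<circ> w \<noteq> w \<circ> sa \<and> sb \<circ> sa \<circ> w \<circ> sa = sa \<circ> w \<circ> sa \<circ> sb \<and>
          sb \<circ> w = w \<circ> sb \<and> sa \<circ> sb \<circ> w \<noteq> sb \<circ> w \<circ> sa)
       \<or> (sa \<circ> w = w \<circ> sa \<and> sb \<circ> sa \<circ> w = sa \<circ> w \<circ> sb \<and>
          sb \<circ> w = w \<circ> sb \<and> sa \<circ> sb \<circ> w = sb \<circ> w \<circ> sa)"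
  unfolding sa_def sb_def
  using commuting_involutions_cases[OF simple_involution simple_involution simple_commute[OF assms(7)]] .

end
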